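(* The vector $\lambda=(\lambda_1,\dots,\lambda_m)$, $\lambda_j:=\nu_j+a_j-j$, is dominant (i.e. $\lambda_1\ge\lambda_2\ge\dots\ge\lambda_m$) and satisfies $$\lambda_j+\lambda_{m+1-j}=w'+n-m-1$$ for all $j\neq\frac{m+1}{2}$. In the exceptional case $n\equiv m\equiv1\bmod 2$ one has $2\lambda_{(m+1)/2}=w'+n-m-2$, whereas in the non-exceptional case the displayed identity holds for all $j=1,\dots,m$ (so $\lambda\in X_0^+(m)$ then).
   Context: Let $n,m\ge1$, not both $1$. For $N\ge1$: $L_0^+(N):=\{(w,l)\in\mathbb Z\times\mathbb Z^N:\ l_1>\dots>l_N,\ l_i+l_{N+1-i}=0,\ w+l_i\equiv N+1 \bmod 2\}$; $X^+(N):=\{\mu\in\mathbb Z^N:\mu_1\ge\dots\ge\mu_N\}$; $X_0^+(N):=\{\mu\in X^+(N): \mu_i+\mu_{N+1-i}\text{ is independent of } i\}$ (purity). There is a bijection $L_0^+(N)\to X_0^+(N)$, $(w,l)\mapsto\mu$ with $\mu_i=\frac{w+l_i+2i-1-N}{2}$, with inverse $w=\mu_1+\mu_N$, $l_i=2\mu_i+N+1-w-2i$. Let $\mu\in X_0^+(n)$ and $\nu\in X_0^+(m)$ correspond to $(w,l)\in L_0^+(n)$ and $(w',l')\in L_0^+(m)$. Standing assumptions: $l_1>l'_1$, and for every pair $(i,j)$ either $l_i\ne l'_j$, or $n,m$ are both odd, $i=\frac{n+1}2$, $j=\frac{m+1}2$ (this holds whenever the associated archimedean pair has a critical number). The position tuple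 $a\in\mathbb Z^m$: $a_j$ is the unique integer in $\{1,\dots,n-1\}$ with $l_{a_j}>l'_j\ge l_{1+a_j}$. *)

theory Defs
  imports Main
begin

text \<open>Tuples in Z^N are represented as functions nat \<Rightarrow> int, using the indices 1..N.\<close>

definition L0plus :: "nat \<Rightarrow> int \<Rightarrow> (nat \<Rightarrow> int) \<Rightarrow> bool" where
  "L0plus N w l \<longleftrightarrow>
     (\<forall>i\<in>{1..N}. \<forall>j\<in>{1..N}. i < j \<longrightarrow> l j < l i) \<and>
     (\<forall>i\<in>{1..N}. l i + l (N + 1 - i) = 0) \<and>
     (\<forall>i\<in>{1..N}. (w + l i) mod 2 = (int N + 1) mod 2)"

definition Xplus :: "nat \<Rightarrow> (nat \<Rightarrow> int) set" where
  "Xplus N = {\<mu>. \<forall>i\<in>{1..N}. \<forall>j\<in>{1..N}. i \<le> j \<longrightarrow> \<mu> j \<le> \<mu> i}"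

definition X0plus :: "nat \<Rightarrow> (nat \<Rightarrow> int) set" where
  "X0plus N = {\<mu> \<in> Xplus N. \<exists>c. \<forall>i\<in>{1..N}. \<mu> i + \<mu> (N + 1 - i) = c}"

text \<open>The bijection L_0^+(N) \<rightarrow> X_0^+(N): mu_i = (w + l_i + 2i - 1 - N)/2 (exact division).\<close>
definition L_to_X :: "nat \<Rightarrow> int \<Rightarrow> (nat \<Rightarrow> int) \<Rightarrow> nat \<Rightarrow> int" where
  "L_to_X N w l i = (w + l i + 2 * int i - 1 - int N) div 2"

definition pos_tuple :: "nat \<Rightarrow> (nat \<Rightarrow> int) \<Rightarrow> (nat \<Rightarrow> int) \<Rightarrow> nat \<Rightarrow> nat" where
  "pos_tuple n l l' j = (THE a. a \<in> {1..n-1} \<and> l a > l' j \<and> l' j \<ge> l (a + 1))"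

end

theory Submission
  imports Defs
begin

text \<open>
  The division in \<open>L_to_X\<close> is exact, so
  \<open>2 \<lambda>\<^sub>j = w' + l'\<^sub>j - 1 - m + 2 a\<^sub>j\<close>, so everything reduces to statements about the
  position tuple \<open>a\<close>. Entries of an element of \<open>L\<^sub>0\<^sup>+(n)\<close> have equal parity, hence
  consecutive ones differ by at least 2; this makes \<open>a\<close> grow at most half as fast as
  \<open>l'\<close> decreases, which is dominance. The reflection \<open>l \<mapsto> -l\<close> reverses both tuples,
  so \<open>a\<^sub>m\<^sub>+\<^sub>1\<^sub>-\<^sub>j = n - a\<^sub>j\<close> unless \<open>l'\<^sub>j\<close> equals some \<open>l\<^sub>i\<close>; by hypothesis this only happens
  for the two middle entries (both 0), where instead \<open>a = (n - 1)/2\<close>.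
\<close>

lemma L0plus_gap:
  assumes "L0plus N w l" "1 \<le> i" "i \<le> k" "k \<le> N"
  shows "2 * (int k - int i) \<le> l i - l k"
  using assms(3,4)
proof (induction k)
  case 0
  then show ?case by simp
next
  case (Suc k)
  show ?case
  proof (cases "i = Suc k")
    case False
    then have ik: "i \<le> k" using Suc.prems by simp
    have "l (Suc k) < l k"
      and "(w + l k) mod 2 = (int N + 1) mod 2" "(w + l (Suc k)) mod 2 = (int N + 1) mod 2"
      using assms(1,2) Suc.prems ik unfolding L0plus_def by auto
    then have "2 \<le> l k - l (Suc k)" by presburger
    then show ?thesis using Suc.IH Suc.prems ik by simp
  qed simp
qed

lemma L0plus_antimono:
  assumes "L0plus N w l" "1 \<le> i" "i \<le> k" "k \<le> N"
  shows "l k \<le> l i"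
  using L0plus_gap[OF assms] assms(3) by simp

lemma L0plus_reflect:
  assumes "L0plus N w l" "i \<in> {1..N}"
  shows "l (N + 1 - i) = - l i"
  using assms unfolding L0plus_def by (simp add: eq_neg_iff_add_eq_0 add.commute)

lemma L0plus_parity:
  assumes "L0plus N w l" "i \<in> {1..N}" "k \<in> {1..N}"
  shows "even (l i - l k)"
proof -
  have "(w + l i) mod 2 = (int N + 1) mod 2" "(w + l k) mod 2 = (int N + 1) mod 2"
    using assms unfolding L0plus_def by blast+
  then show ?thesis by presburger
qed

lemma L_to_X_double:
  assumes "L0plus N w l" "i \<in> {1..N}"
  shows "2 * L_to_X N w l i = w + l i + 2 * int i - 1 - int N"
proof -
  have "(w + l i) mod 2 = (int N + 1) mod 2" using assms unfolding L0plus_def by blast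
  then show ?thesis unfolding L_to_X_def by presburger
qed

lemma pos_tuple_eqI:
  assumes "L0plus n w l" "a \<in> {1..n-1}" "x < l a" "l (a + 1) \<le> x" "l' j = x"
  shows "pos_tuple n l l' j = a"
  unfolding pos_tuple_def
proof (rule the_equality)
  fix b assume b: "b \<in> {1..n-1} \<and> l' j < l b \<and> l (b + 1) \<le> l' j"
  show "b = a"
  proof (rule ccontr)
    assume "b \<noteq> a"
    then consider "a < b" | "b < a" by linarith
    then show False
    proof cases
      case 1
      then have "l b \<le> l (a + 1)" using L0plus_antimono[OF assms(1), of "a + 1" b] b by auto
      then show False using b assms by auto
    next
      case 2
      then have "l a \<le> l (b + 1)" using L0plus_antimono[OF assms(1), of "b + 1" a] assms by auto
      then show False using b assms by auto
    qed
  qed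
qed (use assms in auto)

lemma pos_tuple_spec:
  assumes "L0plus n w l" "1 \<le> n" "l' j < l 1" "l n \<le> l' j"
  defines "a \<equiv> pos_tuple n l l' j"
  shows "a \<in> {1..n-1}" "l' j < l a" "l (a + 1) \<le> l' j"
proof -
  define S where "S = {k\<in>{1..n}. l' j < l k}"
  define b where "b = Max S"
  have fin: "finite S" and "1 \<in> S" "n \<notin> S"
    using assms(2-4) unfolding S_def by auto
  then have "b \<in> S" and "b \<noteq> n"
    unfolding b_def using Max_in by blast+
  then have b: "b \<in> {1..n-1}" "l' j < l b" unfolding S_def by auto
  have "b + 1 \<notin> S" using Max_ge[OF fin, of "b + 1"] unfolding b_def by linarith
  then have "l (b + 1) \<le> l' j" using b unfolding S_def by auto
  moreover from this have "a = b" unfolding a_def using pos_tuple_eqI[OF assms(1) b] by blast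
  ultimately show "a \<in> {1..n-1}" "l' j < l a" "l (a + 1) \<le> l' j" using b by simp_all
qed

locale interlacing_pair =
  fixes n m :: nat and w w' :: int and l l' :: "nat \<Rightarrow> int"
  assumes n_pos: "1 \<le> n" and m_pos: "1 \<le> m"
    and L: "L0plus n w l" and L': "L0plus m w' l'"
    and top: "l' 1 < l 1"
begin

abbreviation a :: "nat \<Rightarrow> nat" where
  "a \<equiv> pos_tuple n l l'"

definition lambda :: "nat \<Rightarrow> int" where
  "lambda j = L_to_X m w' l' j + int (a j) - int j"

lemma n_ge_2: "2 \<le> n"
proof (rule ccontr)
  assume "\<not> 2 \<le> n"
  then have "n = 1" using n_pos by simp
  then have "l 1 = 0" using L0plus_reflect[OF L, of 1] by simp
  moreover have "l' m \<le> l' 1" "l' m = - l' 1"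
    using L0plus_antimono[OF L', of 1 m] L0plus_reflect[OF L', of 1] m_pos by auto
  ultimately show False using top by linarith
qed

lemma a_spec:
  assumes "j \<in> {1..m}"
  shows "a j \<in> {1..n-1}" "l' j < l (a j)" "l (a j + 1) \<le> l' j"
proof -
  have "l' j \<le> l' 1" "l' m \<le> l' j"
    using L0plus_antimono[OF L', of 1 j] L0plus_antimono[OF L', of j m] assms by auto
  moreover have "l n = - l 1" "l' m = - l' 1"
    using L0plus_reflect[OF L, of 1] L0plus_reflect[OF L', of 1] n_pos m_pos by auto
  ultimately have "l' j < l 1" "l n \<le> l' j" using top by linarith+
  then show "a j \<in> {1..n-1}" "l' j < l (a j)" "l (a j + 1) \<le> l' j"
    using pos_tuple_spec[OF L n_pos] by blast+
qed

lemma lambda_double: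
  assumes "j \<in> {1..m}"
  shows "2 * lambda j = w' + l' j - 1 - int m + 2 * int (a j)"
  using L_to_X_double[OF L' assms] unfolding lambda_def by simp

lemma lambda_antimono:
  assumes "i \<in> {1..m}" "j \<in> {1..m}" "i \<le> j"
  shows "lambda j \<le> lambda i"
proof -
  have "2 * (int (a j) - int (a i)) \<le> l' i - l' j"
  proof (cases "a j \<le> a i")
    case True
    then show ?thesis using L0plus_antimono[OF L', of i j] assms by auto
  next
    case False
    then have "2 * (int (a j) - int (a i + 1)) \<le> l (a i + 1) - l (a j)"
      using L0plus_gap[OF L, of "a i + 1" "a j"] a_spec[OF assms(2)] by auto
    then have "2 * (int (a j) - int (a i)) - 2 < l' i - l' j"
      using a_spec[OF assms(1)] a_spec[OF assms(2)] by simp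
    then show ?thesis using L0plus_parity[OF L' assms(1,2)] by presburger
  qed
  then show ?thesis using lambda_double[OF assms(1)] lambda_double[OF assms(2)] by simp
qed

lemma a_reflect:
  assumes "j \<in> {1..m}" "l (a j + 1) \<noteq> l' j"
  shows "a (m + 1 - j) = n - a j"
proof (rule pos_tuple_eqI[OF L])
  have aj: "a j \<in> {1..n-1}" "l' j < l (a j)" "l (a j + 1) < l' j"
    using a_spec[OF assms(1)] assms(2) by auto
  then have "n + 1 - (a j + 1) = n - a j" "n + 1 - a j = n - a j + 1" by auto
  then have "l (n - a j) = - l (a j + 1)" "l (n - a j + 1) = - l (a j)"
    using L0plus_reflect[OF L, of "a j + 1"] L0plus_reflect[OF L, of "a j"] aj(1) by auto
  then show "- l' j < l (n - a j)" "l (n - a j + 1) \<le> - l' j"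
    using aj by auto
  show "n - a j \<in> {1..n-1}" using aj(1) by auto
  show "l' (m + 1 - j) = - l' j" using L0plus_reflect[OF L' assms(1)] .
qed

lemma lambda_reflect:
  assumes "j \<in> {1..m}" "l (a j + 1) \<noteq> l' j"
  shows "lambda j + lambda (m + 1 - j) = w' + int n - int m - 1"
proof -
  have "m + 1 - j \<in> {1..m}" using assms(1) by auto
  then show ?thesis
    using lambda_double[OF assms(1)] lambda_double[of "m + 1 - j"] a_reflect[OF assms]
      L0plus_reflect[OF L' assms(1)] a_spec(1)[OF assms(1)] by auto
qed

lemma lambda_middle:
  assumes "odd n" "odd m"
  shows "2 * lambda ((m + 1) div 2) = w' + int n - int m - 2"
proof -
  define i0 where "i0 = (n + 1) div 2"
  define j0 where "j0 = (m + 1) div 2"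
  have j0: "j0 \<in> {1..m}" "m + 1 - j0 = j0" using assms(2) m_pos unfolding j0_def by (auto elim!: oddE)
  have i0: "i0 \<in> {1..n}" "n + 1 - i0 = i0" "2 \<le> i0" "2 * int (i0 - 1) = int n - 1"
    using assms(1) n_ge_2 unfolding i0_def by (auto elim!: oddE)
  have "l' j0 = 0" using L0plus_reflect[OF L' j0(1)] j0(2) by simp
  moreover have "l i0 = 0" using L0plus_reflect[OF L i0(1)] i0(2) by simp
  moreover have "l i0 < l (i0 - 1)"
  proof -
    have "i0 - 1 \<in> {1..n}" "i0 - 1 < i0" using i0 by auto
    then show ?thesis using L i0(1) unfolding L0plus_def by blast
  qed
  ultimately have "a j0 = i0 - 1" using i0 by (intro pos_tuple_eqI[OF L]) auto
  then show ?thesis using lambda_double[OF j0(1)] \<open>l' j0 = 0\<close> i0(4) unfolding j0_def by simp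
qed

end

theorem proposition3p1:
  fixes n m :: nat and w w' :: int and l l' nu lam :: "nat \<Rightarrow> int"
  assumes "n \<ge> 1" and "m \<ge> 1" and "\<not> (n = 1 \<and> m = 1)"
    and "L0plus n w l" and "L0plus m w' l'"
    and "\<forall>j. nu j = L_to_X m w' l' j"
    and "l 1 > l' 1"
    and "\<forall>i\<in>{1..n}. \<forall>j\<in>{1..m}. l i \<noteq> l' j \<or>
           (odd n \<and> odd m \<and> 2 * i = n + 1 \<and> 2 * j = m + 1)"
    and "\<forall>j. lam j = nu j + int (pos_tuple n l l' j) - int j"
  shows "(\<forall>i\<in>{1..m}. \<forall>j\<in>{1..m}. i \<le> j \<longrightarrow> lam j \<le> lam i)
    \<and> (\<forall>j\<in>{1..m}. 2 * j \<noteq> m + 1 \<longrightarrow> lam j + lam (m + 1 - j) = w' + int n - int m - 1)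
    \<and> (odd n \<and> odd m \<longrightarrow> 2 * lam ((m + 1) div 2) = w' + int n - int m - 2)
    \<and> (\<not> (odd n \<and> odd m) \<longrightarrow>
         (\<forall>j\<in>{1..m}. lam j + lam (m + 1 - j) = w' + int n - int m - 1) \<and> lam \<in> X0plus m)"
proof -
  interpret interlacing_pair n m w w' l l'
    using assms(1,2,4,5,7) by unfold_locales
  have lam_eq: "lam = lambda"
    using assms(6,9) by (simp add: fun_eq_iff lambda_def)
  have off_middle: "l (a j + 1) \<noteq> l' j"
    if "j \<in> {1..m}" "2 * j \<noteq> m + 1 \<or> \<not> (odd n \<and> odd m)" for j
    using assms(8) a_spec(1)[OF that(1)] that by fastforce
  have dominant: "\<forall>i\<in>{1..m}. \<forall>j\<in>{1..m}. i \<le> j \<longrightarrow> lam j \<le> lam i"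
    unfolding lam_eq using lambda_antimono by blast
  moreover have "\<forall>j\<in>{1..m}. 2 * j \<noteq> m + 1 \<longrightarrow> lam j + lam (m + 1 - j) = w' + int n - int m - 1"
    unfolding lam_eq using lambda_reflect off_middle by blast
  moreover have "odd n \<and> odd m \<longrightarrow> 2 * lam ((m + 1) div 2) = w' + int n - int m - 2"
    unfolding lam_eq using lambda_middle by blast
  moreover have "\<not> (odd n \<and> odd m) \<Longrightarrow> \<forall>j\<in>{1..m}. lam j + lam (m + 1 - j) = w' + int n - int m - 1"
    unfolding lam_eq using lambda_reflect off_middle by blast
  ultimately show ?thesis
    using dominant unfolding X0plus_def Xplus_def by blast
qed

end
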